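(* Let $N\ge2$, $\alpha,\beta>-1$, let $x_0<\dots<x_N$ be the JGL nodes with Lagrange basis $h_0,\dots,h_N$, and let $\mu\in(k-1,k)$ with $k\in\{1,2\}$. Suppose $\hat Q_j^\mu\in\mathcal P_N$, $1\le j\le N+1-k$, satisfy ${}^R\hat D_-^\mu\hat Q_j^\mu(x_i)=\delta_{ij}$ for $1\le i\le N+1-k$, together with $\hat Q_j^\mu(-1)=0$ if $k=1$ and $\hat Q_j^\mu(\pm1)=0$ if $k=2$. Let $\hat{\mathbf Q}^{(\mu)}_{lj}=\hat Q_j^\mu(x_l)$ and ${}^R\hat{\mathbf D}^{(\mu)}_{{\rm in},ij}=({}^R\hat D_-^\mu h_j)(x_i)$ for $1\le l,i,j\le N+1-k$. Then $$ \hat{\mathbf Q}^{(\mu)}\,{}^R\hat{\mathbf D}^{(\mu)}_{\rm in}={}^R\hat{\mathbf D}^{(\mu)}_{\rm in}\,\hat{\mathbf Q}^{(\mu)}=\mathbf I_{N+1-k}. $$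
   Context: For $\rho>0$, $(I_-^\rho u)(x)=\frac{1}{\Gamma(\rho)}\int_{-1}^x (x-y)^{\rho-1}u(y)\,dy$, $D^k=d^k/dx^k$; for $\mu\in(k-1,k)$ the Riemann–Liouville derivative is ${}^R D_-^\mu u=D^k(I_-^{k-\mu}u)$, and the modified Riemann–Liouville derivative is ${}^R\hat D_-^\mu u=(1+x)^\mu\,{}^R D_-^\mu u$ (for polynomial $u$ this is a polynomial, evaluated also at $x=-1$). The JGL nodes $x_0<\dots<x_N$ are the zeros of $(1-x^2)\frac{d}{dx}P_N^{(\alpha,\beta)}(x)$ (Jacobi polynomial, Szegő normalization), with $x_0=-1$, $x_N=1$; $h_j\in\mathcal P_N$ satisfies $h_j(x_i)=\delta_{ij}$. $\mathbf I_m$ is the $m\times m$ identity. *)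

theory Defs
  imports "HOL-Analysis.Analysis" "HOL-Computational_Algebra.Polynomial"
begin

text \<open>Jacobi polynomial in Szego normalization:
  P_N^(a,b)(x) = sum_{m=0}^N binom(N+a,N-m) binom(N+b,m) ((x-1)/2)^m ((x+1)/2)^(N-m).\<close>
definition jacobi_poly :: "real \<Rightarrow> real \<Rightarrow> nat \<Rightarrow> real poly" where
  "jacobi_poly a b N =
     (\<Sum>m\<le>N. smult (((real N + a) gchoose (N - m)) * ((real N + b) gchoose m))
                 ([:-1/2, 1/2:] ^ m * [:1/2, 1/2:] ^ (N - m)))"

text \<open>The JGL nodes are the zeros of (1 - x^2) times the derivative of P_N^(a,b).\<close>
definition JGL_poly :: "real \<Rightarrow> real \<Rightarrow> nat \<Rightarrow> real poly" where
  "JGL_poly a b N = [:1, 0, -1:] * pderiv (jacobi_poly a b N)"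

definition RL_integral :: "real \<Rightarrow> (real \<Rightarrow> real) \<Rightarrow> real \<Rightarrow> real" where
  "RL_integral \<rho> u x = (1 / Gamma \<rho>) * integral {-1..x} (\<lambda>y. (x - y) powr (\<rho> - 1) * u y)"

definition RL_deriv :: "real \<Rightarrow> (real \<Rightarrow> real) \<Rightarrow> real \<Rightarrow> real" where
  "RL_deriv \<mu> u x = (let k = nat \<lceil>\<mu>\<rceil> in (deriv ^^ k) (RL_integral (real k - \<mu>) u) x)"

definition mod_RL_deriv :: "real \<Rightarrow> (real \<Rightarrow> real) \<Rightarrow> real \<Rightarrow> real" where
  "mod_RL_deriv \<mu> u x = (1 + x) powr \<mu> * RL_deriv \<mu> u x"

end

theory Submission
  imports Defs "Jordan_Normal_Form.Determinant"
begin

text \<open>By the Beta integral, the modified Riemann--Liouville derivative maps \<open>(1 + x)^n\<close> to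
  \<open>\<Gamma>(n + 1) / \<Gamma>(n + 1 - \<mu>) (1 + x)^n\<close>; in particular it acts linearly on polynomials at every
  point \<open>x > -1\<close>. The derivative of \<open>P_N^(a,b)\<close> has positive coefficients in the variables
  \<open>(t - 1)/2, (t + 1)/2\<close>, so it has no zeros outside \<open>[-1, 1]\<close>: the JGL nodes lie in \<open>[-1, 1]\<close>,
  with \<open>x_0 = -1\<close> and \<open>x_N = 1\<close>. The \<open>Q_j\<close> vanish at the boundary nodes not used for collocation,
  so Lagrange interpolation gives \<open>Q_j = \<Sigma>_l Q_j(x_l) h_l\<close> over the interior nodes, and applying the
  derivative at \<open>x_i\<close> yields \<open>D_in Q = I\<close>. A one-sided inverse of a square matrix is two-sided.\<close>

lemma not_Ints_between_consecutive:
  fixes x :: "'a::linordered_idom"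
  assumes "of_int m < x" "x < of_int m + 1"
  shows "x \<notin> \<int>"
proof
  assume "x \<in> \<int>"
  then obtain z where "x = of_int z" by (auto elim: Ints_cases)
  with assms have "of_int m < (of_int z :: 'a)" "(of_int z :: 'a) < of_int (m + 1)"
    by simp_all
  then show False unfolding of_int_less_iff by linarith
qed

lemma has_integral_RL_kernel_shifted_power:
  assumes "\<rho> > 0" "x > -1"
  shows "((\<lambda>y. (x - y) powr (\<rho> - 1) * (1 + y) ^ n) has_integral
           Beta (real n + 1) \<rho> * (x + 1) powr (real n + \<rho>)) {-1..x}"
proof -
  define s where "s = x + 1"
  have s: "s > 0" using assms by (simp add: s_def)
  let ?f = "\<lambda>t. t powr real n * (1 - t) powr (\<rho> - 1)"
  have "(?f has_integral Beta (real n + 1) \<rho>) (cbox 0 1)"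
    using has_integral_Beta_real[of "real n + 1" \<rho>] assms by simp
  moreover have "s * (1 - 1 / s) = x" using s by (simp add: s_def field_simps)
  ultimately have "((\<lambda>y. ?f ((y + 1) / s)) has_integral s * Beta (real n + 1) \<rho>) {-1..x}"
    using has_integral_affinity'[of ?f _ 0 1 "1/s" "1/s"] s
    by (simp add: cbox_interval add_divide_distrib)
  from has_integral_mult_right[OF this, of "s powr (real n + \<rho> - 1)"]
  have scaled: "((\<lambda>y. s powr (real n + \<rho> - 1) * ?f ((y + 1) / s))
          has_integral Beta (real n + 1) \<rho> * s powr (real n + \<rho>)) {-1..x}"
    using s by (simp add: powr_diff mult_ac)
  have pointwise: "(x - y) powr (\<rho> - 1) * (1 + y) ^ n = s powr (real n + \<rho> - 1) * ?f ((y + 1) / s)"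
    if "y \<in> {-1..x} - {-1}" for y
  proof -
    have "1 - (y + 1) / s = (x - y) / s" using s by (simp add: s_def field_simps)
    moreover have "s powr (real n + \<rho> - 1) = s powr real n * s powr (\<rho> - 1)"
      by (simp add: powr_add[symmetric] add_diff_eq)
    ultimately show ?thesis
      using that s by (simp add: powr_divide powr_realpow add.commute)
  qed
  show ?thesis
    using has_integral_spike_finite[of "{-1}", OF _ pointwise scaled] by (simp add: s_def)
qed

lemma poly_eq_sum_shifted_coeff:
  fixes p :: "real poly"
  assumes "degree p \<le> N"
  shows "poly p y = (\<Sum>n\<le>N. coeff (p \<circ>\<^sub>p [:-1, 1:]) n * (1 + y) ^ n)"
proof -
  let ?q = "p \<circ>\<^sub>p [:-1, 1:]"
  have deg: "degree ?q \<le> N" using assms by (simp add: degree_pcompose)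
  have "poly p y = poly ?q (1 + y)" by (simp add: poly_pcompose)
  also have "\<dots> = poly (\<Sum>n\<le>N. monom (coeff ?q n) n) (1 + y)"
    by (simp only: poly_as_sum_of_monoms'[OF deg])
  also have "\<dots> = (\<Sum>n\<le>N. coeff ?q n * (1 + y) ^ n)"
    by (simp add: poly_sum poly_monom)
  finally show ?thesis .
qed

lemma RL_integral_poly:
  fixes p :: "real poly"
  assumes "\<rho> > 0" "x > -1" "degree p \<le> N"
  shows "RL_integral \<rho> (poly p) x =
    (\<Sum>n\<le>N. coeff (p \<circ>\<^sub>p [:-1, 1:]) n * (Gamma (real n + 1) / Gamma (real n + 1 + \<rho>))
              * (x + 1) powr (real n + \<rho>))"
proof -
  let ?c = "coeff (p \<circ>\<^sub>p [:-1, 1:])"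
  have "((\<lambda>y. \<Sum>n\<le>N. ?c n * ((x - y) powr (\<rho> - 1) * (1 + y) ^ n)) has_integral
      (\<Sum>n\<le>N. ?c n * (Beta (real n + 1) \<rho> * (x + 1) powr (real n + \<rho>)))) {-1..x}"
    by (intro has_integral_sum finite_atMost has_integral_mult_right
        has_integral_RL_kernel_shifted_power assms)
  moreover have "(\<lambda>y. \<Sum>n\<le>N. ?c n * ((x - y) powr (\<rho> - 1) * (1 + y) ^ n)) =
      (\<lambda>y. (x - y) powr (\<rho> - 1) * poly p y)"
    by (simp add: poly_eq_sum_shifted_coeff[OF assms(3)] sum_distrib_left mult_ac)
  ultimately have "integral {-1..x} (\<lambda>y. (x - y) powr (\<rho> - 1) * poly p y) =
      (\<Sum>n\<le>N. ?c n * (Beta (real n + 1) \<rho> * (x + 1) powr (real n + \<rho>)))"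
    by (simp add: integral_unique)
  moreover have "Beta (real n + 1) \<rho> = Gamma \<rho> * (Gamma (real n + 1) / Gamma (real n + 1 + \<rho>))" for n
    by (simp add: Beta_def)
  ultimately show ?thesis
    using Gamma_real_pos[OF assms(1)] by (simp add: RL_integral_def sum_distrib_left mult_ac)
qed

lemma higher_deriv_sum_shifted_powr:
  assumes "finite S" "x > -1"
  shows "(deriv ^^ k) (\<lambda>z. \<Sum>n\<in>S. c n * (z + 1) powr e n) x =
     (\<Sum>n\<in>S. c n * pochhammer (e n - real k + 1) k * (x + 1) powr (e n - real k))"
  using assms(2)
proof (induction k arbitrary: c e x)
  case 0
  then show ?case by simp
next
  case (Suc k)
  let ?f = "\<lambda>z. \<Sum>n\<in>S. c n * (z + 1) powr e n"
  let ?f' = "\<lambda>z. \<Sum>n\<in>S. (c n * e n) * (z + 1) powr (e n - 1)"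
  have "deriv ?f z = ?f' z" if "z > -1" for z
    using that by (intro DERIV_imp_deriv) (auto intro!: derivative_eq_intros sum.cong simp: mult_ac)
  moreover have "eventually (\<lambda>z. z \<in> {-1<..}) (nhds x)"
    using Suc.prems by (intro eventually_nhds_in_open) auto
  ultimately have ev: "eventually (\<lambda>z. deriv ?f z = ?f' z) (nhds x)"
    by (auto elim: eventually_mono)
  have "(deriv ^^ Suc k) ?f x = (deriv ^^ k) (deriv ?f) x"
    by (simp add: funpow_Suc_right del: funpow.simps)
  also have "\<dots> = (deriv ^^ k) ?f' x"
    by (rule higher_deriv_cong_ev[OF ev refl])
  also have "\<dots> = (\<Sum>n\<in>S. (c n * e n) * pochhammer (e n - 1 - real k + 1) k
                                * (x + 1) powr (e n - 1 - real k))"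
    by (rule Suc.IH[OF Suc.prems])
  also have "\<dots> = (\<Sum>n\<in>S. c n * pochhammer (e n - real (Suc k) + 1) (Suc k)
                                * (x + 1) powr (e n - real (Suc k)))"
    by (simp add: pochhammer_rec' algebra_simps)
  finally show ?case .
qed

lemma mod_RL_deriv_poly:
  fixes p :: "real poly"
  assumes "\<mu> \<notin> \<int>" "x > -1" "degree p \<le> N"
  shows "mod_RL_deriv \<mu> (poly p) x =
    (\<Sum>n\<le>N. coeff (p \<circ>\<^sub>p [:-1, 1:]) n * (Gamma (real n + 1) / Gamma (real n + 1 - \<mu>)) * (x + 1) ^ n)"
proof -
  define k where "k = nat \<lceil>\<mu>\<rceil>"
  define \<rho> where "\<rho> = real k - \<mu>"
  have "real k \<noteq> \<mu>" using assms(1) by (metis Ints_of_nat)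
  then have \<rho>: "\<rho> > 0" unfolding \<rho>_def k_def by linarith
  let ?c = "\<lambda>n. coeff (p \<circ>\<^sub>p [:-1, 1:]) n * (Gamma (real n + 1) / Gamma (real n + 1 + \<rho>))"
  have "eventually (\<lambda>z. z \<in> {-1<..}) (nhds x)"
    using assms(2) by (intro eventually_nhds_in_open) auto
  then have "eventually (\<lambda>z. RL_integral \<rho> (poly p) z =
                (\<Sum>n\<le>N. ?c n * (z + 1) powr (real n + \<rho>))) (nhds x)"
    by (rule eventually_mono) (simp add: RL_integral_poly[OF \<rho> _ assms(3)])
  then have "RL_deriv \<mu> (poly p) x = (deriv ^^ k) (\<lambda>z. \<Sum>n\<le>N. ?c n * (z + 1) powr (real n + \<rho>)) x"
    unfolding RL_deriv_def k_def[symmetric] \<rho>_def[symmetric] Let_def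
    by (rule higher_deriv_cong_ev[OF _ refl])
  also have "\<dots> = (\<Sum>n\<le>N. ?c n * pochhammer (real n + \<rho> - real k + 1) k
                                * (x + 1) powr (real n + \<rho> - real k))"
    using assms(2) by (intro higher_deriv_sum_shifted_powr) auto
  also have "\<dots> = (\<Sum>n\<le>N. ?c n * pochhammer (real n + 1 - \<mu>) k * (x + 1) powr (real n - \<mu>))"
  proof -
    have "real n + \<rho> - real k + 1 = real n + 1 - \<mu>" "real n + \<rho> - real k = real n - \<mu>" for n
      by (simp_all add: \<rho>_def)
    then show ?thesis by (simp only:)
  qed
  finally have RL: "RL_deriv \<mu> (poly p) x = \<dots>" .
  have "pochhammer (real n + 1 - \<mu>) k = Gamma (real n + 1 + \<rho>) / Gamma (real n + 1 - \<mu>)" for n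
  proof -
    have "real n + 1 - \<mu> \<notin> \<int>"
    proof
      assume "real n + 1 - \<mu> \<in> \<int>"
      then have "real n + 1 - (real n + 1 - \<mu>) \<in> \<int>" by (intro Ints_diff) auto
      with assms(1) show False by simp
    qed
    then have "real n + 1 - \<mu> \<notin> \<int>\<^sub>\<le>\<^sub>0" by auto
    then have "pochhammer (real n + 1 - \<mu>) k = Gamma (real n + 1 - \<mu> + real k) / Gamma (real n + 1 - \<mu>)"
      by (rule pochhammer_Gamma)
    also have "real n + 1 - \<mu> + real k = real n + 1 + \<rho>" by (simp add: \<rho>_def)
    finally show ?thesis .
  qed
  moreover have "(1 + x) powr \<mu> * (x + 1) powr (real n - \<mu>) = (x + 1) ^ n" for n
    using assms(2) by (simp add: powr_add[symmetric] powr_realpow add.commute)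
  moreover have "Gamma (real n + 1 + \<rho>) \<noteq> 0" for n
    using \<rho> by (intro less_imp_neq[symmetric] Gamma_real_pos) linarith
  ultimately have "(1 + x) powr \<mu> * (?c n * pochhammer (real n + 1 - \<mu>) k * (x + 1) powr (real n - \<mu>)) =
      coeff (p \<circ>\<^sub>p [:-1, 1:]) n * (Gamma (real n + 1) / Gamma (real n + 1 - \<mu>)) * (x + 1) ^ n" for n
    by (simp add: mult.left_commute[of "(1 + x) powr \<mu>"])
  then show ?thesis
    unfolding mod_RL_deriv_def RL sum_distrib_left by (intro sum.cong refl)
qed

lemma mod_RL_deriv_poly_sum:
  fixes h :: "'i \<Rightarrow> real poly"
  assumes "\<mu> \<notin> \<int>" "x > -1" "finite L" "\<And>l. l \<in> L \<Longrightarrow> degree (h l) \<le> N"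
  shows "mod_RL_deriv \<mu> (poly (\<Sum>l\<in>L. Polynomial.smult (c l) (h l))) x = (\<Sum>l\<in>L. c l * mod_RL_deriv \<mu> (poly (h l)) x)"
proof -
  let ?w = "\<lambda>n. Gamma (real n + 1) / Gamma (real n + 1 - \<mu>) * (x + 1) ^ n"
  have "degree (\<Sum>l\<in>L. Polynomial.smult (c l) (h l)) \<le> N"
    using assms(4) by (intro degree_sum_le assms(3)) (auto intro: order_trans[OF degree_smult_le])
  then have "mod_RL_deriv \<mu> (poly (\<Sum>l\<in>L. Polynomial.smult (c l) (h l))) x =
      (\<Sum>n\<le>N. (\<Sum>l\<in>L. c l * coeff (h l \<circ>\<^sub>p [:-1, 1:]) n) * ?w n)"
    by (simp add: mod_RL_deriv_poly[OF assms(1,2)] pcompose_sum pcompose_smult coeff_sum mult.assoc)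
  also have "\<dots> = (\<Sum>l\<in>L. c l * (\<Sum>n\<le>N. coeff (h l \<circ>\<^sub>p [:-1, 1:]) n * ?w n))"
    by (simp add: sum_distrib_left sum_distrib_right sum_divide_distrib mult_ac sum.swap[of _ "{..N}"])
  also have "\<dots> = (\<Sum>l\<in>L. c l * mod_RL_deriv \<mu> (poly (h l)) x)"
    by (intro sum.cong refl) (simp add: mod_RL_deriv_poly[OF assms(1,2) assms(4)] mult.assoc)
  finally show ?thesis .
qed

lemma poly_eq_Lagrange_sum:
  fixes p :: "'a::field poly" and h :: "nat \<Rightarrow> 'a poly"
  assumes "inj_on x {0..N}"
    and "\<And>i j. i \<le> N \<Longrightarrow> j \<le> N \<Longrightarrow> poly (h j) (x i) = (if i = j then 1 else 0)"
    and "\<And>j. j \<le> N \<Longrightarrow> degree (h j) \<le> N" and "degree p \<le> N"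
    and "L \<subseteq> {0..N}" and "\<And>l. l \<in> {0..N} - L \<Longrightarrow> poly p (x l) = 0"
  shows "p = (\<Sum>l\<in>L. Polynomial.smult (poly p (x l)) (h l))"
proof (rule poly_eqI_degree)
  fix t assume "t \<in> x ` {0..N}"
  then obtain i where i: "i \<le> N" "t = x i" by auto
  have "(\<Sum>l\<in>L. poly p (x l) * poly (h l) (x i)) = (\<Sum>l\<in>L. if l = i then poly p (x i) else 0)"
    using assms(2,5) i by (intro sum.cong refl) auto
  also have "\<dots> = poly p (x i)"
    using assms(5,6) i by (auto simp: finite_subset)
  finally show "poly p t = poly (\<Sum>l\<in>L. Polynomial.smult (poly p (x l)) (h l)) t"
    using i by (simp add: poly_sum)
next
  have "card (x ` {0..N}) = N + 1" using assms(1) by (simp add: card_image)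
  moreover have "degree (\<Sum>l\<in>L. Polynomial.smult (poly p (x l)) (h l)) \<le> N"
    using assms(3,5) by (intro degree_sum_le finite_subset[OF assms(5)]) (auto intro: order_trans[OF degree_smult_le])
  ultimately show "degree p < card (x ` {0..N})" "degree (\<Sum>l\<in>L. Polynomial.smult (poly p (x l)) (h l)) < card (x ` {0..N})"
    using assms(4) by auto
qed

lemma mod_RL_deriv_Lagrange_collocation:
  fixes h Q :: "nat \<Rightarrow> real poly"
  assumes "\<mu> \<notin> \<int>" "inj_on x {0..N}"
    and "\<And>i j. i \<le> N \<Longrightarrow> j \<le> N \<Longrightarrow> poly (h j) (x i) = (if i = j then 1 else 0)"
    and "\<And>j. j \<le> N \<Longrightarrow> degree (h j) \<le> N"
    and "I \<subseteq> {0..N}" "\<And>i. i \<in> I \<Longrightarrow> x i > -1"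
    and "\<And>j. j \<in> I \<Longrightarrow> degree (Q j) \<le> N"
    and "\<And>j l. j \<in> I \<Longrightarrow> l \<in> {0..N} - I \<Longrightarrow> poly (Q j) (x l) = 0"
    and "\<And>i j. i \<in> I \<Longrightarrow> j \<in> I \<Longrightarrow> mod_RL_deriv \<mu> (poly (Q j)) (x i) = (if i = j then 1 else 0)"
    and "i \<in> I" "j \<in> I"
  shows "(\<Sum>l\<in>I. mod_RL_deriv \<mu> (poly (h l)) (x i) * poly (Q j) (x l)) = (if i = j then 1 else 0)"
proof -
  have finite_I: "finite I" using assms(5) by (rule finite_subset) simp
  have "Q j = (\<Sum>l\<in>I. Polynomial.smult (poly (Q j) (x l)) (h l))"
    using assms(8)[OF assms(11)] by (intro poly_eq_Lagrange_sum[OF assms(2-4) assms(7)[OF assms(11)] assms(5)])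
  then have "mod_RL_deriv \<mu> (poly (Q j)) (x i) =
      mod_RL_deriv \<mu> (poly (\<Sum>l\<in>I. Polynomial.smult (poly (Q j) (x l)) (h l))) (x i)"
    by (rule arg_cong[where f = "\<lambda>q. mod_RL_deriv \<mu> (poly q) (x i)"])
  also have "\<dots> = (\<Sum>l\<in>I. poly (Q j) (x l) * mod_RL_deriv \<mu> (poly (h l)) (x i))"
    using assms(4,5) by (intro mod_RL_deriv_poly_sum[OF assms(1) assms(6)[OF assms(10)] finite_I, where N = N]) auto
  finally show ?thesis
    using assms(9)[OF assms(10,11)] by (simp add: mult.commute)
qed

lemma left_inverse_imp_right_inverse_sum:
  fixes F G :: "nat \<Rightarrow> nat \<Rightarrow> 'a::field"
  assumes "\<forall>i\<in>{1..n}. \<forall>j\<in>{1..n}. (\<Sum>l\<in>{1..n}. F i l * G l j) = (if i = j then 1 else 0)"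
  shows "\<forall>i\<in>{1..n}. \<forall>j\<in>{1..n}. (\<Sum>l\<in>{1..n}. G i l * F l j) = (if i = j then 1 else 0)"
proof -
  define A where "A = mat n n (\<lambda>(i, j). F (Suc i) (Suc j))"
  define B where "B = mat n n (\<lambda>(i, j). G (Suc i) (Suc j))"
  have shift: "(\<Sum>l\<in>{1..n}. f l) = (\<Sum>l\<in>{0..<n}. f (Suc l))" for f :: "nat \<Rightarrow> 'a"
    by (simp add: sum.atLeast1_atMost_eq atLeast0LessThan)
  have "A * B = 1\<^sub>m n"
  proof (rule eq_matI)
    fix i j assume ij: "i < dim_row (1\<^sub>m n :: 'a mat)" "j < dim_col (1\<^sub>m n :: 'a mat)"
    then have "(A * B) $$ (i, j) = (\<Sum>l\<in>{0..<n}. F (Suc i) (Suc l) * G (Suc l) (Suc j))"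
      by (simp add: A_def B_def scalar_prod_def)
    also have "\<dots> = (\<Sum>l\<in>{1..n}. F (Suc i) l * G l (Suc j))"
      by (rule shift[symmetric])
    also have "\<dots> = (if i = j then 1 else 0)"
      using assms ij by simp
    finally show "(A * B) $$ (i, j) = 1\<^sub>m n $$ (i, j)"
      using ij by simp
  qed (simp_all add: A_def B_def)
  then have BA: "B * A = 1\<^sub>m n"
    by (rule mat_mult_left_right_inverse[rotated 2]) (simp_all add: A_def B_def)
  show ?thesis
  proof (intro ballI)
    fix i j assume ij: "i \<in> {1..n}" "j \<in> {1..n}"
    then obtain i' j' where "i = Suc i'" "j = Suc j'" "i' < n" "j' < n"
      by (metis atLeastAtMost_iff Suc_le_lessD not0_implies_Suc not_one_le_zero)
    then have "(\<Sum>l\<in>{1..n}. G i l * F l j) = (B * A) $$ (i', j')"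
      using shift[of "\<lambda>l. G i l * F l j"] by (simp add: A_def B_def scalar_prod_def)
    also have "\<dots> = (if i = j then 1 else 0)"
      using BA \<open>i = Suc i'\<close> \<open>j = Suc j'\<close> \<open>i' < n\<close> \<open>j' < n\<close> by simp
    finally show "(\<Sum>l\<in>{1..n}. G i l * F l j) = (if i = j then 1 else 0)" .
  qed
qed

text \<open>\<open>(\<partial>\<^sub>u + \<partial>\<^sub>v)\<close> applied to the binary form \<open>\<Sigma>\<^sub>m c m u^m v^(N-m)\<close>; the Jacobi polynomial is
  such a form evaluated at \<open>u = (t - 1)/2\<close>, \<open>v = (t + 1)/2\<close>.\<close>
definition form_diag_deriv :: "(nat \<Rightarrow> real) \<Rightarrow> nat \<Rightarrow> real \<Rightarrow> real \<Rightarrow> real" where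
  "form_diag_deriv c N u v =
     (\<Sum>m\<le>N. c m * (real m * u ^ (m - 1) * v ^ (N - m) + real (N - m) * u ^ m * v ^ (N - m - 1)))"

lemma form_diag_deriv_pos:
  assumes "u > 0" "v > 0" "N \<ge> 1" "\<And>m. m \<le> N \<Longrightarrow> c m > 0"
  shows "form_diag_deriv c N u v > 0"
proof -
  let ?f = "\<lambda>m. c m * (real m * u ^ (m - 1) * v ^ (N - m) + real (N - m) * u ^ m * v ^ (N - m - 1))"
  have "0 < ?f N" using assms by simp
  also have "?f N \<le> sum ?f {..N}"
  proof (rule member_le_sum)
    fix m assume "m \<in> {..N} - {N}"
    then show "0 \<le> ?f m"
      using assms(1,2) assms(4)[of m] by (intro mult_nonneg_nonneg add_nonneg_nonneg) auto
  qed auto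
  finally show ?thesis unfolding form_diag_deriv_def .
qed

lemma form_diag_deriv_scale:
  "form_diag_deriv c N (s * u) (s * v) = s ^ (N - 1) * form_diag_deriv c N u v"
proof -
  have left: "real m * (s * u) ^ (m - 1) * (s * v) ^ (N - m) = s ^ (N - 1) * (real m * u ^ (m - 1) * v ^ (N - m))"
    if "m \<le> N" for m
  proof (cases "m = 0")
    case False
    with that have e: "s ^ (m - 1) * s ^ (N - m) = s ^ (N - 1)" by (simp flip: power_add)
    have "real m * (s * u) ^ (m - 1) * (s * v) ^ (N - m) = (s ^ (m - 1) * s ^ (N - m)) * (real m * u ^ (m - 1) * v ^ (N - m))"
      by (simp only: power_mult_distrib mult_ac)
    then show ?thesis by (simp only: e)
  qed simp
  have right: "real (N - m) * (s * u) ^ m * (s * v) ^ (N - m - 1) = s ^ (N - 1) * (real (N - m) * u ^ m * v ^ (N - m - 1))"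
    if "m \<le> N" for m
  proof (cases "m = N")
    case False
    with that have e: "s ^ m * s ^ (N - m - 1) = s ^ (N - 1)" by (simp flip: power_add)
    have "real (N - m) * (s * u) ^ m * (s * v) ^ (N - m - 1) = (s ^ m * s ^ (N - m - 1)) * (real (N - m) * u ^ m * v ^ (N - m - 1))"
      by (simp only: power_mult_distrib mult_ac)
    then show ?thesis by (simp only: e)
  qed simp
  show ?thesis
    unfolding form_diag_deriv_def sum_distrib_left
  proof (intro sum.cong refl)
    fix m assume "m \<in> {..N}"
    then have m: "m \<le> N" by simp
    show "c m * (real m * (s * u) ^ (m - 1) * (s * v) ^ (N - m) + real (N - m) * (s * u) ^ m * (s * v) ^ (N - m - 1)) =
        s ^ (N - 1) * (c m * (real m * u ^ (m - 1) * v ^ (N - m) + real (N - m) * u ^ m * v ^ (N - m - 1)))"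
      unfolding left[OF m] right[OF m] by (simp add: algebra_simps)
  qed
qed

lemma poly_pderiv_jacobi_poly:
  "poly (pderiv (jacobi_poly a b N)) t =
     form_diag_deriv (\<lambda>m. ((real N + a) gchoose (N - m)) * ((real N + b) gchoose m)) N ((t - 1) / 2) ((t + 1) / 2) / 2"
proof -
  define c where "c = (\<lambda>m. ((real N + a) gchoose (N - m)) * ((real N + b) gchoose m))"
  have "poly (jacobi_poly a b N) = (\<lambda>t. \<Sum>m\<le>N. c m * (((t - 1) / 2) ^ m * ((t + 1) / 2) ^ (N - m)))"
    unfolding jacobi_poly_def by (rule ext) (simp add: poly_sum c_def field_simps)
  moreover have "((\<lambda>t. \<Sum>m\<le>N. c m * (((t - 1) / 2) ^ m * ((t + 1) / 2) ^ (N - m))) has_real_derivative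
      form_diag_deriv c N ((t - 1) / 2) ((t + 1) / 2) / 2) (at t)"
    unfolding form_diag_deriv_def sum_divide_distrib
  proof (rule DERIV_sum)
    fix m
    show "((\<lambda>t. c m * (((t - 1) / 2) ^ m * ((t + 1) / 2) ^ (N - m))) has_real_derivative
       c m * (real m * ((t - 1) / 2) ^ (m - 1) * ((t + 1) / 2) ^ (N - m)
              + real (N - m) * ((t - 1) / 2) ^ m * ((t + 1) / 2) ^ (N - m - 1)) / 2) (at t)"
      by (auto intro!: derivative_eq_intros simp: algebra_simps)
  qed
  ultimately have "(poly (jacobi_poly a b N) has_real_derivative form_diag_deriv c N ((t - 1) / 2) ((t + 1) / 2) / 2) (at t)"
    by simp
  from DERIV_unique[OF poly_DERIV this] show ?thesis by (simp only: c_def)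
qed

lemma JGL_poly_root_bounds:
  assumes "a > -1" "b > -1" "N \<ge> 1" "poly (JGL_poly a b N) t = 0"
  shows "t \<in> {-1..1}"
proof (rule ccontr)
  assume out: "t \<notin> {-1..1}"
  define c where "c = (\<lambda>m. ((real N + a) gchoose (N - m)) * ((real N + b) gchoose m))"
  have c_pos: "c m > 0" if "m \<le> N" for m
    unfolding c_def gbinomial_pochhammer' using assms that by (intro mult_pos_pos divide_pos_pos pochhammer_pos) auto
  from out have "1 * 1 < \<bar>t\<bar> * \<bar>t\<bar>"
    by (intro mult_strict_mono) auto
  then have "poly [:1, 0, -1:] t \<noteq> 0"
    by (simp add: algebra_simps)
  with assms(4) have "form_diag_deriv c N ((t - 1) / 2) ((t + 1) / 2) = 0"
    by (simp add: JGL_poly_def poly_pderiv_jacobi_poly c_def)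
  moreover have "(t - 1) / 2 = sgn t * \<bar>(t - 1) / 2\<bar>" "(t + 1) / 2 = sgn t * \<bar>(t + 1) / 2\<bar>"
    using out by (auto simp: sgn_if)
  ultimately have "sgn t ^ (N - 1) * form_diag_deriv c N \<bar>(t - 1) / 2\<bar> \<bar>(t + 1) / 2\<bar> = 0"
    by (metis form_diag_deriv_scale)
  moreover have "form_diag_deriv c N \<bar>(t - 1) / 2\<bar> \<bar>(t + 1) / 2\<bar> > 0"
    using out assms(3) c_pos by (intro form_diag_deriv_pos) auto
  ultimately show False
    using out by (simp add: sgn_if split: if_splits)
qed

lemma strict_mono_on_endpoints:
  fixes x :: "nat \<Rightarrow> 'a::linorder"
  assumes "strict_mono_on {0..N} x" "x ` {0..N} \<subseteq> {lo..hi}" "lo \<in> x ` {0..N}" "hi \<in> x ` {0..N}"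
  shows "x 0 = lo" "x N = hi"
proof -
  from assms(3) obtain m where "m \<le> N" "x m = lo" by auto
  moreover have "lo \<le> x 0" using assms(2) by (auto simp: image_subset_iff)
  ultimately show "x 0 = lo"
    using strict_mono_onD[OF assms(1), of 0 m] by (cases "m = 0") auto
  from assms(4) obtain m where "m \<le> N" "x m = hi" by auto
  moreover have "x N \<le> hi" using assms(2) by (auto simp: image_subset_iff)
  ultimately show "x N = hi"
    using strict_mono_onD[OF assms(1), of m N] by (cases "m = N") auto
qed

lemma JGL_nodes_endpoints:
  assumes "a > -1" "b > -1" "N \<ge> 1" "strict_mono_on {0..N} x"
    and "x ` {0..N} = {t. poly (JGL_poly a b N) t = 0}"
  shows "x 0 = -1" "x N = 1"
proof -
  have "x ` {0..N} \<subseteq> {-1..1}"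
    using assms(5) JGL_poly_root_bounds[OF assms(1-3)] by auto
  moreover have "poly (JGL_poly a b N) (-1) = 0" "poly (JGL_poly a b N) 1 = 0"
    by (simp_all add: JGL_poly_def)
  ultimately show "x 0 = -1" "x N = 1"
    using strict_mono_on_endpoints[OF assms(4)] assms(5) by auto
qed

theorem theorem5p1:
  fixes N k :: nat and a b \<mu> :: real
    and x :: "nat \<Rightarrow> real" and h Q :: "nat \<Rightarrow> real poly"
  assumes N: "N \<ge> 2"
    and ab: "a > -1" "b > -1"
    and nodes_mono: "strict_mono_on {0..N} x"
    and nodes: "x ` {0..N} = {t. poly (JGL_poly a b N) t = 0}"
    and h_deg: "\<And>j. j \<le> N \<Longrightarrow> degree (h j) \<le> N"
    and h_interp: "\<And>i j. i \<le> N \<Longrightarrow> j \<le> N \<Longrightarrow> poly (h j) (x i) = (if i = j then 1 else 0)"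
    and k: "k \<in> {1, 2}"
    and mu: "real k - 1 < \<mu>" "\<mu> < real k"
    and Q_deg: "\<And>j. j \<in> {1..N+1-k} \<Longrightarrow> degree (Q j) \<le> N"
    and Q_coll: "\<And>i j. i \<in> {1..N+1-k} \<Longrightarrow> j \<in> {1..N+1-k} \<Longrightarrow>
                   mod_RL_deriv \<mu> (poly (Q j)) (x i) = (if i = j then 1 else 0)"
    and Q_left: "\<And>j. j \<in> {1..N+1-k} \<Longrightarrow> poly (Q j) (-1) = 0"
    and Q_right: "\<And>j. k = 2 \<Longrightarrow> j \<in> {1..N+1-k} \<Longrightarrow> poly (Q j) 1 = 0"
  shows "(\<forall>i\<in>{1..N+1-k}. \<forall>j\<in>{1..N+1-k}.
            (\<Sum>l\<in>{1..N+1-k}. poly (Q l) (x i) * mod_RL_deriv \<mu> (poly (h j)) (x l))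
              = (if i = j then 1 else 0))
       \<and> (\<forall>i\<in>{1..N+1-k}. \<forall>j\<in>{1..N+1-k}.
            (\<Sum>l\<in>{1..N+1-k}. mod_RL_deriv \<mu> (poly (h l)) (x i) * poly (Q j) (x l))
              = (if i = j then 1 else 0))"
proof -
  define I where "I = {1..N+1-k}"
  have \<mu>: "\<mu> \<notin> \<int>"
    using mu by (intro not_Ints_between_consecutive[of "int k - 1"]) simp_all
  have ends: "x 0 = -1" "x N = 1"
    using JGL_nodes_endpoints[OF ab _ nodes_mono nodes] N by auto
  have I_sub: "I \<subseteq> {0..N}" and interior: "\<And>i. i \<in> I \<Longrightarrow> x i > -1"
    using k ends strict_mono_onD[OF nodes_mono, of 0] by (auto simp: I_def)
  have vanish: "poly (Q j) (x l) = 0" if "j \<in> I" "l \<in> {0..N} - I" for j l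
  proof -
    have "l = 0 \<or> k = 2 \<and> l = N" using that k by (auto simp: I_def)
    then show ?thesis using that ends Q_left Q_right by (auto simp: I_def)
  qed
  have "\<forall>i\<in>I. \<forall>j\<in>I. (\<Sum>l\<in>I. mod_RL_deriv \<mu> (poly (h l)) (x i) * poly (Q j) (x l)) = (if i = j then 1 else 0)"
    using Q_deg Q_coll unfolding I_def[symmetric]
    by (intro ballI mod_RL_deriv_Lagrange_collocation[OF \<mu> strict_mono_on_imp_inj_on[OF nodes_mono]
          h_interp h_deg I_sub interior _ vanish])
  moreover from this have "\<forall>i\<in>I. \<forall>j\<in>I. (\<Sum>l\<in>I. poly (Q l) (x i) * mod_RL_deriv \<mu> (poly (h j)) (x l)) = (if i = j then 1 else 0)"
    unfolding I_def by (rule left_inverse_imp_right_inverse_sum)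
  ultimately show ?thesis unfolding I_def by blast
qed

end
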